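(* Let $T<\infty$ and define $(V_t,S_t)_{t\le T}$ and $J_t$ (on $\{t<T_e\}$) by the backward recursion: $V_T=G_T$, $S_T=1_{D_T}$, and for $t=T-1,\dots,0$, $J_t=E[S_{t+1}V_{t+1}\mid\mathcal{F}_t]/E[S_{t+1}\mid\mathcal{F}_t]$ on $\{t<T_e\}$, with $V_t=G_t,S_t=1$ on $\{t<T_e, G_t\ge J_t\}$; $V_t=J_t, S_t=E[S_{t+1}\mid\mathcal{F}_t]$ on $\{t<T_e,G_t<J_t\}$; $V_t=G_t, S_t=1_{D_t}$ on $\{t\ge T_e\}$. Let $\theta_t=1_{\{G_t\ge V_t\}}$. Then $\theta$ is admissible, \[ J_t=J_t(\theta)\quad\text{and}\quad E[S_{t+1}\mid\mathcal{F}_t]=P(\mathcal{L}_t\theta\lhd\sigma\mid\mathcal{F}_t)\quad\text{on }\{t<T_e\}, \] and for all $t\le T$, \[ S_t=\begin{cases}P(\mathcal{L}_t\theta\lhd\sigma\mid\mathcal{F}_t)&\text{on } D_t\cap\{\theta_t=0\},\\ 1&\text{on } D_t\cap\{\theta_t=1\},\\ 0 & \text{on } D_t^c.\end{cases} \]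
   Context: Let $T\in\mathbb{N}$ and $\mathbb{T}=\{0,1,\dots,T\}$. Let $(\Omega,\mathcal{F},P)$ be a probability space with a filtration $(\mathcal{F}_t)_{t\le T}$, $\mathcal{F}_0$ trivial. Let $\sigma$ be a stopping time with values in $\{0,1,2,\dots\}\cup\{\infty\}$ and $P(\sigma>0)=1$; set $D_t=\{t<\sigma\}$. Let $G=(G_t)_{t\le T}$ be an adapted payoff process; on $D_t^c$ one sets $G_t=\Delta$, an auxiliary symbol with the convention $0\cdot\Delta=0$. Standing assumption: $E[\sup_{t\le T}|G_t|1_{D_t}]<\infty$. For $s,t\in[0,\infty]$ write $s\lhd t$ iff $s<t$ or $t=\infty$. Convention: $\inf\emptyset=\infty$. The effective horizon is $T_e=T\wedge\inf\{0\le t<T: P(D_{t+1}\mid\mathcal{F}_t)=0\}$. A stopping policy is a $\{0,1\}$-valued adapted process $\theta=(\theta_t)_{t\in\mathbb{T}}$, and $\mathcal{L}_t\theta=\inf\{s>t:\theta_s=1\}$. $\theta$ is admissible if $P(\mathcal{L}_t\theta\lhd\sigma\mid\mathcal{F}_t)>0$ on $\{t<T_e\}$ and $\theta_t=1$ on $\{t\ge T_e\}$. For admissible $\theta$, on $\{t<T_e\}$, $J_t(\theta)=E[G_{\mathcal{L}_t\theta}1_{\{\mathcal{L}_t\theta\lhd\sigma\}}\mid\mathcal{F}_t]/P(\mathcal{L}_t\theta\lhd\sigma\mid\mathcal{F}_t)$. *)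

theory Defs
  imports "HOL-Probability.Probability"
begin

definition lhd :: "enat \<Rightarrow> enat \<Rightarrow> bool" where
  "lhd s t \<longleftrightarrow> s < t \<or> t = \<infinity>"

definition Dset :: "'a measure \<Rightarrow> ('a \<Rightarrow> enat) \<Rightarrow> nat \<Rightarrow> 'a set" where
  "Dset M \<sigma> t = {\<omega> \<in> space M. enat t < \<sigma> \<omega>}"

definition cprob :: "'a measure \<Rightarrow> 'a measure \<Rightarrow> 'a set \<Rightarrow> 'a \<Rightarrow> real" where
  "cprob M N A = real_cond_exp M N (indicator A)"

definition Te :: "'a measure \<Rightarrow> (nat \<Rightarrow> 'a measure) \<Rightarrow> ('a \<Rightarrow> enat) \<Rightarrow> nat \<Rightarrow> 'a \<Rightarrow> nat" where
  "Te M F \<sigma> T \<omega> =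
     (if \<exists>t<T. cprob M (F t) (Dset M \<sigma> (Suc t)) \<omega> = 0
      then (LEAST t. t < T \<and> cprob M (F t) (Dset M \<sigma> (Suc t)) \<omega> = 0) else T)"

definition Lop :: "nat \<Rightarrow> (nat \<Rightarrow> 'a \<Rightarrow> real) \<Rightarrow> nat \<Rightarrow> 'a \<Rightarrow> enat" where
  "Lop T \<theta> t \<omega> =
     (if \<exists>s. t < s \<and> s \<le> T \<and> \<theta> s \<omega> = 1
      then enat (LEAST s. t < s \<and> s \<le> T \<and> \<theta> s \<omega> = 1) else \<infinity>)"

definition Lev :: "'a measure \<Rightarrow> ('a \<Rightarrow> enat) \<Rightarrow> nat \<Rightarrow> (nat \<Rightarrow> 'a \<Rightarrow> real) \<Rightarrow> nat \<Rightarrow> 'a set" where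
  "Lev M \<sigma> T \<theta> t = {\<omega> \<in> space M. lhd (Lop T \<theta> t \<omega>) (\<sigma> \<omega>)}"

definition admissible ::
  "'a measure \<Rightarrow> (nat \<Rightarrow> 'a measure) \<Rightarrow> ('a \<Rightarrow> enat) \<Rightarrow> nat \<Rightarrow> (nat \<Rightarrow> 'a \<Rightarrow> real) \<Rightarrow> bool" where
  "admissible M F \<sigma> T \<theta> \<longleftrightarrow>
     (\<forall>t\<le>T. \<theta> t \<in> borel_measurable (F t) \<and> (\<forall>\<omega>\<in>space M. \<theta> t \<omega> \<in> {0, 1})) \<and>
     (\<forall>t\<le>T. AE \<omega> in M. t < Te M F \<sigma> T \<omega> \<longrightarrow> cprob M (F t) (Lev M \<sigma> T \<theta> t) \<omega> > 0) \<and>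
     (\<forall>t\<le>T. AE \<omega> in M. Te M F \<sigma> T \<omega> \<le> t \<longrightarrow> \<theta> t \<omega> = 1)"

text \<open>The integrand is 0 where L_t theta = \<infinity> (only relevant on a null set for admissible theta).\<close>
definition Jtheta ::
  "'a measure \<Rightarrow> (nat \<Rightarrow> 'a measure) \<Rightarrow> ('a \<Rightarrow> enat) \<Rightarrow> (nat \<Rightarrow> 'a \<Rightarrow> real) \<Rightarrow> nat
    \<Rightarrow> (nat \<Rightarrow> 'a \<Rightarrow> real) \<Rightarrow> nat \<Rightarrow> 'a \<Rightarrow> real" where
  "Jtheta M F \<sigma> G T \<theta> t \<omega> =
     real_cond_exp M (F t)
       (\<lambda>\<omega>'. (case Lop T \<theta> t \<omega>' of enat s \<Rightarrow> G s \<omega>' | \<infinity> \<Rightarrow> 0)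
               * indicator (Lev M \<sigma> T \<theta> t) \<omega>') \<omega>
     / cprob M (F t) (Lev M \<sigma> T \<theta> t) \<omega>"

end

theory Submission
  imports Defs
begin

text \<open>
  Backward induction on t establishes the representation
  S_t = \<theta>_t 1_{D_t} + (1 - \<theta>_t) P(L_t\<theta> \<lhd> \<sigma> | F_t) and
  S_t V_t = \<theta>_t G_t 1_{D_t} + (1 - \<theta>_t) E[G_{L_t\<theta>} 1_{L_t\<theta> \<lhd> \<sigma>} | F_t],
  together with positivity of P(L_t\<theta> \<lhd> \<sigma> | F_t) on {t < T_e}.
  Both indicators obey the same one-step recursion as S and S V, switched by \<theta>_{t+1};
  conditioning this recursion on F_t and using the tower property turns the representation at t+1
  into E[S_{t+1} | F_t] = P(L_t\<theta> \<lhd> \<sigma> | F_t) and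
  E[S_{t+1} V_{t+1} | F_t] = E[G_{L_t\<theta>} 1_{L_t\<theta> \<lhd> \<sigma>} | F_t], which is the claim about J_t.
  Positivity holds because S_{t+1} is nonnegative and strictly positive on D_{t+1}, an event of
  positive conditional probability before T_e.
\<close>

lemma integrable_switch:
  fixes h A X :: "'a \<Rightarrow> real"
  assumes [measurable]: "h \<in> borel_measurable M" and h01: "\<And>x. x \<in> space M \<Longrightarrow> h x \<in> {0, 1}"
    and "integrable M A" "integrable M X"
  shows "integrable M (\<lambda>x. h x * A x)" "integrable M (\<lambda>x. (1 - h x) * X x)"
    and "integrable M (\<lambda>x. h x * A x + (1 - h x) * X x)"
proof -
  have "\<bar>h x\<bar> \<le> 1" "\<bar>1 - h x\<bar> \<le> 1" if "x \<in> space M" for x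
    using h01[OF that] by auto
  then have "\<bar>h x * A x\<bar> \<le> \<bar>A x\<bar>" "\<bar>(1 - h x) * X x\<bar> \<le> \<bar>X x\<bar>" if "x \<in> space M" for x
    using that by (simp_all add: abs_mult mult_left_le_one_le)
  then show hA: "integrable M (\<lambda>x. h x * A x)" and hX: "integrable M (\<lambda>x. (1 - h x) * X x)"
    using assms(3,4) by (auto intro: Bochner_Integration.integrable_bound)
  then show "integrable M (\<lambda>x. h x * A x + (1 - h x) * X x)"
    by simp
qed

context sigma_finite_subalgebra
begin

lemma real_cond_exp_tower_mult:
  assumes "subalgebra M N" "subalgebra N F"
    and [measurable]: "g \<in> borel_measurable N" "X \<in> borel_measurable M"
    and "integrable M (\<lambda>x. g x * X x)" "integrable M (\<lambda>x. g x * real_cond_exp M N X x)"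
  shows "AE x in M. real_cond_exp M F (\<lambda>x. g x * real_cond_exp M N X x) x
    = real_cond_exp M F (\<lambda>x. g x * X x) x"
proof -
  interpret N: sigma_finite_subalgebra M N
    by (rule nested_subalg_is_sigma_finite[OF assms(1,2)])
  have [measurable]: "g \<in> borel_measurable M"
    using measurable_from_subalg[OF assms(1,3)] .
  have "AE x in M. real_cond_exp M N (\<lambda>x. g x * X x) x = g x * real_cond_exp M N X x"
    using assms(5) by (intro N.real_cond_exp_mult) simp_all
  then have "AE x in M. real_cond_exp M F (\<lambda>x. g x * real_cond_exp M N X x) x
      = real_cond_exp M F (real_cond_exp M N (\<lambda>x. g x * X x)) x"
    by (intro real_cond_exp_cong) auto
  moreover have "AE x in M. real_cond_exp M F (real_cond_exp M N (\<lambda>x. g x * X x)) x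
      = real_cond_exp M F (\<lambda>x. g x * X x) x"
    using assms(1,2,5) by (rule real_cond_exp_nested_subalg)
  ultimately show ?thesis by eventually_elim simp
qed

lemma real_cond_exp_switch:
  assumes "subalgebra M N" "subalgebra N F"
    and [measurable]: "h \<in> borel_measurable N" and h01: "\<And>x. x \<in> space M \<Longrightarrow> h x \<in> {0, 1}"
    and "integrable M A" "integrable M X" and [measurable]: "W \<in> borel_measurable M"
    and W: "AE x in M. W x = h x * A x + (1 - h x) * real_cond_exp M N X x"
  shows "AE x in M. real_cond_exp M F W x
    = real_cond_exp M F (\<lambda>x. h x * A x + (1 - h x) * X x) x"
proof -
  interpret N: sigma_finite_subalgebra M N
    by (rule nested_subalg_is_sigma_finite[OF assms(1,2)])
  have [measurable]: "h \<in> borel_measurable M"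
    using measurable_from_subalg[OF assms(1,3)] .
  have [measurable]: "A \<in> borel_measurable M" "X \<in> borel_measurable M"
    using assms(5,6) by auto
  note int = integrable_switch[where M=M, OF _ h01]
  have hA: "integrable M (\<lambda>x. h x * A x)" and hX: "integrable M (\<lambda>x. (1 - h x) * X x)"
    and hEX: "integrable M (\<lambda>x. (1 - h x) * real_cond_exp M N X x)"
    using int assms(5,6) N.real_cond_exp_int(1)[OF assms(6)] by simp_all
  have "AE x in M. real_cond_exp M F W x
      = real_cond_exp M F (\<lambda>x. h x * A x + (1 - h x) * real_cond_exp M N X x) x"
    using W by (rule real_cond_exp_cong) simp_all
  moreover have "AE x in M. real_cond_exp M F (\<lambda>x. h x * A x + (1 - h x) * real_cond_exp M N X x) x
      = real_cond_exp M F (\<lambda>x. h x * A x) x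
        + real_cond_exp M F (\<lambda>x. (1 - h x) * real_cond_exp M N X x) x"
    using hA hEX by (rule real_cond_exp_add)
  moreover have "AE x in M. real_cond_exp M F (\<lambda>x. (1 - h x) * real_cond_exp M N X x) x
      = real_cond_exp M F (\<lambda>x. (1 - h x) * X x) x"
    using assms(1,2) hX hEX by (intro real_cond_exp_tower_mult) simp_all
  moreover have "AE x in M. real_cond_exp M F (\<lambda>x. h x * A x + (1 - h x) * X x) x
      = real_cond_exp M F (\<lambda>x. h x * A x) x + real_cond_exp M F (\<lambda>x. (1 - h x) * X x) x"
    using hA hX by (rule real_cond_exp_add)
  ultimately show ?thesis by eventually_elim simp
qed

lemma real_cond_exp_eq_0_imp:
  assumes "integrable M f" "AE x in M. 0 \<le> f x" "B \<in> sets F"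
    and "AE x in M. x \<in> B \<longrightarrow> real_cond_exp M F f x = 0"
  shows "AE x in M. x \<in> B \<longrightarrow> f x = 0"
proof -
  have [measurable]: "B \<in> sets M" "f \<in> borel_measurable M"
    using assms(1,3) subalg by (auto simp: subalgebra_def)
  have int: "integrable M (\<lambda>x. indicator B x * f x)"
    using integrable_mult_indicator[OF _ assms(1)] by simp
  have "(\<integral>x. indicator B x * f x \<partial>M) = (\<integral>x. indicator B x * real_cond_exp M F f x \<partial>M)"
    using int assms(3) by (intro real_cond_exp_intg(2)[symmetric]) auto
  also have "\<dots> = (\<integral>x. 0 \<partial>M)"
    using assms(4) by (intro integral_cong_AE) (auto simp: indicator_def)
  finally have "(\<integral>x. indicator B x * f x \<partial>M) = 0" by simp
  moreover have "AE x in M. 0 \<le> indicator B x * f x"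
    using assms(2) by eventually_elim (simp add: indicator_def)
  ultimately have "AE x in M. indicator B x * f x = 0"
    using integral_nonneg_eq_0_iff_AE[OF int] by simp
  then show ?thesis by eventually_elim (simp add: indicator_def)
qed

lemma real_cond_exp_eq_0_if:
  assumes "integrable M f" "B \<in> sets F" "AE x in M. x \<in> B \<longrightarrow> f x = 0"
  shows "AE x in M. x \<in> B \<longrightarrow> real_cond_exp M F f x = 0"
proof -
  have [measurable]: "B \<in> sets F" "B \<in> sets M" "f \<in> borel_measurable M"
    using assms(1,2) subalg by (auto simp: subalgebra_def)
  have "AE x in M. real_cond_exp M F (\<lambda>x. indicator B x * f x) x
      = indicator B x * real_cond_exp M F f x"
    using integrable_mult_indicator[OF _ assms(1)] by (intro real_cond_exp_mult) simp_all
  moreover have "AE x in M. real_cond_exp M F (\<lambda>x. indicator B x * f x) x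
      = real_cond_exp M F (\<lambda>x. 0) x"
    using assms(3) by (intro real_cond_exp_cong) (auto simp: indicator_def)
  moreover have "AE x in M. real_cond_exp M F (\<lambda>x. 0) x = 0"
    by (rule real_cond_exp_F_meas) simp_all
  ultimately show ?thesis by eventually_elim (simp add: indicator_def)
qed

lemma real_cond_exp_pos_or_null:
  assumes "integrable M f" "AE x in M. 0 \<le> f x" "integrable M g"
    and "AE x in M. f x = 0 \<longrightarrow> g x = 0"
  shows "AE x in M. 0 < real_cond_exp M F f x \<or> real_cond_exp M F g x = 0"
proof -
  define B where "B = {x \<in> space M. real_cond_exp M F f x \<le> 0}"
  have "{x \<in> space F. real_cond_exp M F f x \<le> 0} \<in> sets F"
    by measurable
  moreover have "space F = space M"
    using subalg by (simp add: subalgebra_def)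
  ultimately have B: "B \<in> sets F"
    by (simp add: B_def)
  have "AE x in M. 0 \<le> real_cond_exp M F f x"
    using assms(1,2) by (intro real_cond_exp_pos) auto
  then have "AE x in M. x \<in> B \<longrightarrow> real_cond_exp M F f x = 0"
    by eventually_elim (auto simp: B_def)
  with assms(1,2) B have "AE x in M. x \<in> B \<longrightarrow> f x = 0"
    by (rule real_cond_exp_eq_0_imp)
  with assms(4) have "AE x in M. x \<in> B \<longrightarrow> g x = 0"
    by eventually_elim auto
  with assms(3) B have "AE x in M. x \<in> B \<longrightarrow> real_cond_exp M F g x = 0"
    by (rule real_cond_exp_eq_0_if)
  with AE_space show ?thesis
    by eventually_elim (auto simp: B_def)
qed

end

lemma Te_le: "Te M F \<sigma> T \<omega> \<le> T"
  unfolding Te_def by (auto intro: LeastI2_ex less_imp_le)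

lemma less_Te_iff:
  "t < Te M F \<sigma> T \<omega> \<longleftrightarrow> t < T \<and> (\<forall>s\<le>t. cprob M (F s) (Dset M \<sigma> (Suc s)) \<omega> \<noteq> 0)"
proof -
  let ?P = "\<lambda>s. s < T \<and> cprob M (F s) (Dset M \<sigma> (Suc s)) \<omega> = 0"
  show ?thesis
  proof (cases "\<exists>s. ?P s")
    case True
    then have L: "?P (LEAST s. ?P s)"
      by (rule LeastI_ex)
    have "t < (LEAST s. ?P s) \<longleftrightarrow> t < T \<and> (\<forall>s\<le>t. \<not> ?P s)"
      using L not_less_Least[of _ ?P] by (meson le_less_trans less_trans not_le)
    then show ?thesis
      using True L unfolding Te_def by auto
  qed (auto simp: Te_def)
qed

lemma less_Te_imp_less: "t < Te M F \<sigma> T \<omega> \<Longrightarrow> t < T"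
  using Te_le[of M F \<sigma> T \<omega>] by linarith

lemma Lop_last: "T \<le> t \<Longrightarrow> Lop T \<theta> t \<omega> = \<infinity>"
  unfolding Lop_def by auto

lemma Lop_Suc:
  assumes "t < T"
  shows "Lop T \<theta> t \<omega> = (if \<theta> (Suc t) \<omega> = 1 then enat (Suc t) else Lop T \<theta> (Suc t) \<omega>)"
proof (cases "\<theta> (Suc t) \<omega> = 1")
  case True
  then have "(LEAST s. t < s \<and> s \<le> T \<and> \<theta> s \<omega> = 1) = Suc t"
    using assms by (intro Least_equality) auto
  then show ?thesis
    using True assms unfolding Lop_def by (auto intro!: exI[of _ "Suc t"])
next
  case False
  then have "(\<lambda>s. t < s \<and> s \<le> T \<and> \<theta> s \<omega> = 1) = (\<lambda>s. Suc t < s \<and> s \<le> T \<and> \<theta> s \<omega> = 1)"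
    by (auto simp: fun_eq_iff) (metis Suc_lessI)
  then show ?thesis
    using False unfolding Lop_def by (simp, blast)
qed

lemma Lev_last: "T \<le> t \<Longrightarrow> Lev M \<sigma> T \<theta> t = {\<omega> \<in> space M. \<sigma> \<omega> = \<infinity>}"
  by (auto simp: Lev_def Lop_last lhd_def)

lemma Lev_Suc:
  "t < T \<Longrightarrow> Lev M \<sigma> T \<theta> t
    = {\<omega> \<in> Dset M \<sigma> (Suc t). \<theta> (Suc t) \<omega> = 1} \<union> {\<omega> \<in> Lev M \<sigma> T \<theta> (Suc t). \<theta> (Suc t) \<omega> \<noteq> 1}"
  by (auto simp: Lev_def Dset_def Lop_Suc lhd_def)

lemma Dset_Suc_subset: "Dset M \<sigma> (Suc t) \<subseteq> Dset M \<sigma> t"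
  by (auto simp: Dset_def) (meson Suc_ile_eq less_imp_le)

locale stopping_problem = prob_space M
  for M :: "'a measure" +
  fixes F :: "nat \<Rightarrow> 'a measure" and \<sigma> :: "'a \<Rightarrow> enat" and G :: "nat \<Rightarrow> 'a \<Rightarrow> real" and T :: nat
  assumes subalg: "\<And>t. subalgebra M (F t)"
    and filt: "\<And>s t. s \<le> t \<Longrightarrow> sets (F s) \<subseteq> sets (F t)"
    and stopping: "\<And>t. {\<omega> \<in> space M. \<sigma> \<omega> \<le> enat t} \<in> sets (F t)"
    and adapted: "\<And>t. G t \<in> borel_measurable (F t)"
    and integr: "integrable M (\<lambda>\<omega>. Max ((\<lambda>t. \<bar>G t \<omega>\<bar> * indicator (Dset M \<sigma> t) \<omega>) ` {..T}))"
begin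

lemma sigma_finite_subalgebra_F: "sigma_finite_subalgebra M (F t)"
proof -
  interpret finite_measure_subalgebra M "F t"
    by unfold_locales (rule subalg)
  show ?thesis
    by (rule sigma_finite_subalgebra_axioms)
qed

lemma integrable_indicator_real: "A \<in> sets M \<Longrightarrow> integrable M (indicator A :: 'a \<Rightarrow> real)"
  by (rule integrable_const_bound[where B=1]) auto

lemma space_F [simp]: "space (F t) = space M"
  using subalg[of t] by (simp add: subalgebra_def)

lemma sets_F_subset: "sets (F t) \<subseteq> sets M"
  using subalg[of t] by (simp add: subalgebra_def)

lemma subalgebra_F_F: "s \<le> t \<Longrightarrow> subalgebra (F t) (F s)"
  using filt by (simp add: subalgebra_def)

lemma measurable_F_mono: "s \<le> t \<Longrightarrow> f \<in> borel_measurable (F s) \<Longrightarrow> f \<in> borel_measurable (F t)"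
  by (rule measurable_from_subalg[OF subalgebra_F_F])

lemma measurable_F_M: "f \<in> borel_measurable (F t) \<Longrightarrow> f \<in> borel_measurable M"
  by (rule measurable_from_subalg[OF subalg])

lemma Dset_sets_F [measurable]: "Dset M \<sigma> t \<in> sets (F t)"
proof -
  have "Dset M \<sigma> t = space (F t) - {\<omega> \<in> space M. \<sigma> \<omega> \<le> enat t}"
    by (auto simp: Dset_def not_le)
  then show ?thesis
    using sets.compl_sets[OF stopping[of t]] by simp
qed

lemma Dset_sets [measurable]: "Dset M \<sigma> t \<in> sets M"
  using Dset_sets_F sets_F_subset by blast

lemma G_measurable [measurable]: "G t \<in> borel_measurable M"
  by (rule measurable_F_M[OF adapted])

lemma cprob_Dset_measurable: "cprob M (F s) (Dset M \<sigma> (Suc s)) \<in> borel_measurable (F t)"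
  if "s \<le> t"
  unfolding cprob_def by (rule measurable_F_mono[OF that]) measurable

lemma less_Te_measurable [measurable]: "Measurable.pred (F t) (\<lambda>\<omega>. t < Te M F \<sigma> T \<omega>)"
proof -
  have [measurable]: "cprob M (F s) (Dset M \<sigma> (Suc s)) \<in> borel_measurable (F t)" if "s \<in> {..t}" for s
    using that by (intro cprob_Dset_measurable) simp
  have "Measurable.pred (F t) (\<lambda>\<omega>. t < T \<and> (\<forall>s\<in>{..t}. cprob M (F s) (Dset M \<sigma> (Suc s)) \<omega> \<noteq> 0))"
    by measurable
  then show ?thesis
    by (simp add: less_Te_iff)
qed

lemma less_Te_measurable_M [measurable]: "Measurable.pred M (\<lambda>\<omega>. t < Te M F \<sigma> T \<omega>)"
  by (rule measurable_from_subalg[OF subalg less_Te_measurable])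

lemma Dset_if_less_Te: "AE \<omega> in M. t < Te M F \<sigma> T \<omega> \<longrightarrow> \<omega> \<in> Dset M \<sigma> t"
proof -
  interpret sigma_finite_subalgebra M "F t"
    by (rule sigma_finite_subalgebra_F)
  have eq: "(\<lambda>\<omega>. indicator (Dset M \<sigma> t) \<omega> * indicator (Dset M \<sigma> (Suc t)) \<omega>)
      = (indicator (Dset M \<sigma> (Suc t)) :: 'a \<Rightarrow> real)"
    using Dset_Suc_subset[of M \<sigma> t] by (auto simp: fun_eq_iff indicator_def)
  have "AE \<omega> in M. real_cond_exp M (F t) (\<lambda>\<omega>. indicator (Dset M \<sigma> t) \<omega> * indicator (Dset M \<sigma> (Suc t)) \<omega>) \<omega>
      = indicator (Dset M \<sigma> t) \<omega> * cprob M (F t) (Dset M \<sigma> (Suc t)) \<omega>"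
    unfolding cprob_def by (rule real_cond_exp_mult) (auto simp: eq integrable_indicator_real)
  then have "AE \<omega> in M. cprob M (F t) (Dset M \<sigma> (Suc t)) \<omega>
      = indicator (Dset M \<sigma> t) \<omega> * cprob M (F t) (Dset M \<sigma> (Suc t)) \<omega>"
    unfolding eq cprob_def .
  then show ?thesis
    by eventually_elim (auto simp: less_Te_iff cprob_def indicator_def)
qed

definition payoff_bound :: "'a \<Rightarrow> real" where
  "payoff_bound \<omega> = Max ((\<lambda>t. \<bar>G t \<omega>\<bar> * indicator (Dset M \<sigma> t) \<omega>) ` {..T})"

lemma integrable_payoff_bound: "integrable M payoff_bound"
  using integr unfolding payoff_bound_def[abs_def] .

lemma abs_payoff_le_bound: "s \<le> T \<Longrightarrow> \<bar>G s \<omega> * indicator (Dset M \<sigma> s) \<omega>\<bar> \<le> payoff_bound \<omega>"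
  unfolding payoff_bound_def by (rule Max_ge) (auto simp: abs_mult)

lemma integrable_payoff:
  assumes "s \<le> T"
  shows "integrable M (\<lambda>\<omega>. G s \<omega> * indicator (Dset M \<sigma> s) \<omega>)"
proof (rule Bochner_Integration.integrable_bound[OF integrable_payoff_bound])
  show "AE \<omega> in M. norm (G s \<omega> * indicator (Dset M \<sigma> s) \<omega>) \<le> norm (payoff_bound \<omega>)"
    using abs_payoff_le_bound[OF assms] by (auto intro: order_trans[OF _ abs_ge_self])
qed simp

end

locale stopping_policy = stopping_problem +
  fixes \<theta> :: "nat \<Rightarrow> 'a \<Rightarrow> real"
  assumes policy_measurable: "\<And>t. t \<le> T \<Longrightarrow> \<theta> t \<in> borel_measurable (F t)"
    and policy_01: "\<And>t \<omega>. \<theta> t \<omega> \<in> {0, 1}"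
begin

definition exit_payoff :: "nat \<Rightarrow> 'a \<Rightarrow> real" where
  "exit_payoff t \<omega> =
     (case Lop T \<theta> t \<omega> of enat s \<Rightarrow> G s \<omega> | \<infinity> \<Rightarrow> 0) * indicator (Lev M \<sigma> T \<theta> t) \<omega>"

lemma Jtheta_eq: "Jtheta M F \<sigma> G T \<theta> t = (\<lambda>\<omega>.
    real_cond_exp M (F t) (exit_payoff t) \<omega> / cprob M (F t) (Lev M \<sigma> T \<theta> t) \<omega>)"
  by (simp add: fun_eq_iff Jtheta_def exit_payoff_def[abs_def])

lemma policy_measurable_M [measurable]: "t \<le> T \<Longrightarrow> \<theta> t \<in> borel_measurable M"
  by (rule measurable_F_M[OF policy_measurable])

lemma indicator_Lev_Suc:
  "t < T \<Longrightarrow> indicator (Lev M \<sigma> T \<theta> t) \<omega> = \<theta> (Suc t) \<omega> * indicator (Dset M \<sigma> (Suc t)) \<omega>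
     + (1 - \<theta> (Suc t) \<omega>) * indicator (Lev M \<sigma> T \<theta> (Suc t)) \<omega>"
  using policy_01[of "Suc t" \<omega>] by (auto simp: Lev_Suc indicator_def)

lemma exit_payoff_Suc:
  "t < T \<Longrightarrow> exit_payoff t \<omega> = \<theta> (Suc t) \<omega> * (G (Suc t) \<omega> * indicator (Dset M \<sigma> (Suc t)) \<omega>)
     + (1 - \<theta> (Suc t) \<omega>) * exit_payoff (Suc t) \<omega>"
  using policy_01[of "Suc t" \<omega>]
  by (auto simp: exit_payoff_def Lev_def Dset_def indicator_def Lop_Suc lhd_def)

lemma Lev_sets [measurable]: "t \<le> T \<Longrightarrow> Lev M \<sigma> T \<theta> t \<in> sets M"
proof (induction t rule: inc_induct)
  case base
  have "Lev M \<sigma> T \<theta> T = space M - (\<Union>n. {\<omega> \<in> space M. \<sigma> \<omega> \<le> enat n})"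
    by (auto simp: Lev_last) (metis not_infinity_eq order_refl)
  moreover have "(\<Union>n. {\<omega> \<in> space M. \<sigma> \<omega> \<le> enat n}) \<in> sets M"
    using stopping sets_F_subset by blast
  ultimately show ?case
    by simp
next
  case (step t)
  then show ?case
    by (simp add: Lev_Suc)
qed

lemma exit_payoff_measurable [measurable]: "t \<le> T \<Longrightarrow> exit_payoff t \<in> borel_measurable M"
proof (induction t rule: inc_induct)
  case base
  then show ?case
    by (simp add: exit_payoff_def Lop_last)
next
  case (step t)
  have [measurable]: "\<theta> (Suc t) \<in> borel_measurable M" "exit_payoff (Suc t) \<in> borel_measurable M"
    using step by simp_all
  have "(\<lambda>\<omega>. \<theta> (Suc t) \<omega> * (G (Suc t) \<omega> * indicator (Dset M \<sigma> (Suc t)) \<omega>)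
     + (1 - \<theta> (Suc t) \<omega>) * exit_payoff (Suc t) \<omega>) \<in> borel_measurable M"
    by measurable
  then show ?case
    by (simp add: exit_payoff_Suc[OF step(2)])
qed

lemma abs_exit_payoff_le_bound: "\<bar>exit_payoff t \<omega>\<bar> \<le> payoff_bound \<omega>"
proof (cases "Lop T \<theta> t \<omega>")
  case (enat s)
  then have "s \<le> T"
    unfolding Lop_def by (auto split: if_splits intro: LeastI2_ex)
  moreover have "\<omega> \<in> Lev M \<sigma> T \<theta> t \<Longrightarrow> \<omega> \<in> Dset M \<sigma> s"
    using enat by (auto simp: Lev_def Dset_def lhd_def)
  ultimately show ?thesis
    using enat abs_payoff_le_bound[of s \<omega>] by (auto simp: exit_payoff_def indicator_def)
next
  case infinity
  then show ?thesis
    using abs_payoff_le_bound[of 0 \<omega>] by (simp add: exit_payoff_def)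
qed

lemma integrable_exit_payoff: "t \<le> T \<Longrightarrow> integrable M (exit_payoff t)"
  by (rule Bochner_Integration.integrable_bound[OF integrable_payoff_bound])
    (use abs_exit_payoff_le_bound in \<open>auto intro: order_trans[OF _ abs_ge_self]\<close>)

end

locale snell_recursion = stopping_problem +
  fixes V S J \<theta> :: "nat \<Rightarrow> 'a \<Rightarrow> real"
  assumes V_T: "\<And>\<omega>. V T \<omega> = G T \<omega>"
    and S_T: "\<And>\<omega>. S T \<omega> = indicator (Dset M \<sigma> T) \<omega>"
    and J_def: "\<And>t \<omega>. t < T \<Longrightarrow> t < Te M F \<sigma> T \<omega> \<Longrightarrow>
       J t \<omega> = real_cond_exp M (F t) (\<lambda>\<omega>'. S (Suc t) \<omega>' * V (Suc t) \<omega>') \<omega>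
                / real_cond_exp M (F t) (S (Suc t)) \<omega>"
    and rec_stop: "\<And>t \<omega>. t < T \<Longrightarrow> t < Te M F \<sigma> T \<omega> \<Longrightarrow> G t \<omega> \<ge> J t \<omega> \<Longrightarrow>
       V t \<omega> = G t \<omega> \<and> S t \<omega> = 1"
    and rec_cont: "\<And>t \<omega>. t < T \<Longrightarrow> t < Te M F \<sigma> T \<omega> \<Longrightarrow> G t \<omega> < J t \<omega> \<Longrightarrow>
       V t \<omega> = J t \<omega> \<and> S t \<omega> = real_cond_exp M (F t) (S (Suc t)) \<omega>"
    and rec_end: "\<And>t \<omega>. t < T \<Longrightarrow> Te M F \<sigma> T \<omega> \<le> t \<Longrightarrow>
       V t \<omega> = G t \<omega> \<and> S t \<omega> = indicator (Dset M \<sigma> t) \<omega>"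
    and theta_def: "\<And>t \<omega>. \<theta> t \<omega> = (if G t \<omega> \<ge> V t \<omega> then 1 else 0)"
begin

lemma theta_01: "\<theta> t \<omega> \<in> {0, 1}"
  by (simp add: theta_def)

lemma theta_last: "\<theta> T \<omega> = 1"
  by (simp add: theta_def V_T)

lemma theta_after_Te: "t \<le> T \<Longrightarrow> Te M F \<sigma> T \<omega> \<le> t \<Longrightarrow> \<theta> t \<omega> = 1"
  by (cases "t = T") (auto simp: theta_last theta_def rec_end V_T)

lemma less_Te_if_theta_0: "t \<le> T \<Longrightarrow> \<theta> t \<omega> = 0 \<Longrightarrow> t < Te M F \<sigma> T \<omega>"
  using theta_after_Te[of t \<omega>] by fastforce

text \<open>J is only determined on {t < T_e}; cont_value extends its defining formula to all of
  \<Omega>, which is what makes \<theta>, S and V measurable.\<close>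

definition cont_value :: "nat \<Rightarrow> 'a \<Rightarrow> real" where
  "cont_value t \<omega> = real_cond_exp M (F t) (\<lambda>\<omega>'. S (Suc t) \<omega>' * V (Suc t) \<omega>') \<omega>
     / real_cond_exp M (F t) (S (Suc t)) \<omega>"

lemma cont_value_measurable [measurable]: "cont_value t \<in> borel_measurable (F t)"
  unfolding cont_value_def by measurable

lemma cont_value_measurable_M [measurable]: "cont_value t \<in> borel_measurable M"
  by (rule measurable_F_M[OF cont_value_measurable])

lemma recursion_explicit:
  assumes "t < T"
  shows "\<theta> t \<omega> = (if t < Te M F \<sigma> T \<omega> \<and> G t \<omega> < cont_value t \<omega> then 0 else 1)" (is ?\<theta>)
    and "S t \<omega> = (if t < Te M F \<sigma> T \<omega>
      then if G t \<omega> < cont_value t \<omega> then real_cond_exp M (F t) (S (Suc t)) \<omega> else 1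
      else indicator (Dset M \<sigma> t) \<omega>)" (is ?S)
    and "V t \<omega> = (if t < Te M F \<sigma> T \<omega> \<and> G t \<omega> < cont_value t \<omega> then cont_value t \<omega> else G t \<omega>)"
      (is ?V)
proof -
  have "?\<theta> \<and> ?S \<and> ?V"
  proof (cases "t < Te M F \<sigma> T \<omega>")
    case True
    then show ?thesis
      using rec_stop[OF assms True] rec_cont[OF assms True] J_def[OF assms True]
      by (cases "G t \<omega> < J t \<omega>") (auto simp: theta_def cont_value_def)
  next
    case False
    then show ?thesis
      using rec_end[OF assms, of \<omega>] by (simp add: theta_def)
  qed
  then show ?\<theta> ?S ?V
    by simp_all
qed

lemma theta_measurable: "t \<le> T \<Longrightarrow> \<theta> t \<in> borel_measurable (F t)"
proof (cases "t = T")
  case False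
  moreover assume "t \<le> T"
  ultimately have "t < T" by simp
  have [measurable]: "G t \<in> borel_measurable (F t)"
    by (rule adapted)
  have "(\<lambda>\<omega>. if t < Te M F \<sigma> T \<omega> \<and> G t \<omega> < cont_value t \<omega> then 0 else 1 :: real)
      \<in> borel_measurable (F t)"
    by measurable
  then show ?thesis
    by (simp add: recursion_explicit(1)[OF \<open>t < T\<close>, abs_def])
next
  case True
  moreover have "\<theta> T = (\<lambda>_. 1)"
    by (simp add: fun_eq_iff theta_last)
  ultimately show ?thesis
    by simp
qed

sublocale stopping_policy M F \<sigma> G T \<theta>
  by unfold_locales (auto simp: theta_measurable theta_def)

lemma S_measurable [measurable]: "t \<le> T \<Longrightarrow> S t \<in> borel_measurable M"
proof (cases "t = T")
  case False
  moreover assume "t \<le> T"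
  ultimately have "t < T" by simp
  have "(\<lambda>\<omega>. if t < Te M F \<sigma> T \<omega>
      then if G t \<omega> < cont_value t \<omega> then real_cond_exp M (F t) (S (Suc t)) \<omega> else 1
      else indicator (Dset M \<sigma> t) \<omega>) \<in> borel_measurable M"
    by measurable
  then show ?thesis
    by (simp add: recursion_explicit(2)[OF \<open>t < T\<close>, abs_def])
qed (simp add: S_T[abs_def])

lemma V_measurable [measurable]: "t \<le> T \<Longrightarrow> V t \<in> borel_measurable M"
proof (cases "t = T")
  case False
  moreover assume "t \<le> T"
  ultimately have "t < T" by simp
  have "(\<lambda>\<omega>. if t < Te M F \<sigma> T \<omega> \<and> G t \<omega> < cont_value t \<omega> then cont_value t \<omega> else G t \<omega>)
      \<in> borel_measurable M"
    by measurable
  then show ?thesis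
    by (simp add: recursion_explicit(3)[OF \<open>t < T\<close>, abs_def])
qed (simp add: V_T[abs_def])

definition snell_repr :: "nat \<Rightarrow> bool" where
  "snell_repr u \<longleftrightarrow>
     (AE \<omega> in M. S u \<omega> = \<theta> u \<omega> * indicator (Dset M \<sigma> u) \<omega>
        + (1 - \<theta> u \<omega>) * cprob M (F u) (Lev M \<sigma> T \<theta> u) \<omega>)
   \<and> (AE \<omega> in M. S u \<omega> * V u \<omega> = \<theta> u \<omega> * (G u \<omega> * indicator (Dset M \<sigma> u) \<omega>)
        + (1 - \<theta> u \<omega>) * real_cond_exp M (F u) (exit_payoff u) \<omega>)
   \<and> (AE \<omega> in M. u < Te M F \<sigma> T \<omega> \<longrightarrow> 0 < cprob M (F u) (Lev M \<sigma> T \<theta> u) \<omega>)"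

lemma snell_repr_last: "snell_repr T"
  by (auto simp: snell_repr_def S_T V_T theta_last dest: less_Te_imp_less)

context
  fixes t assumes t: "t < T" and repr: "snell_repr (Suc t)"
begin

interpretation Ft: sigma_finite_subalgebra M "F t"
  by (rule sigma_finite_subalgebra_F)

lemma Suc_t_le: "Suc t \<le> T"
  using t by simp

lemma measurable_Suc [measurable]:
  "\<theta> (Suc t) \<in> borel_measurable M" "S (Suc t) \<in> borel_measurable M" "V (Suc t) \<in> borel_measurable M"
  "Lev M \<sigma> T \<theta> (Suc t) \<in> sets M"
  using Suc_t_le by simp_all

lemmas real_cond_exp_switch_Suc = Ft.real_cond_exp_switch[OF subalg subalgebra_F_F[OF le_SucI]
    policy_measurable[OF Suc_leI[OF t]] theta_01]

lemma cond_exp_S_Suc: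
  "AE \<omega> in M. real_cond_exp M (F t) (S (Suc t)) \<omega> = cprob M (F t) (Lev M \<sigma> T \<theta> t) \<omega>"
proof -
  have "(\<lambda>\<omega>. \<theta> (Suc t) \<omega> * indicator (Dset M \<sigma> (Suc t)) \<omega>
      + (1 - \<theta> (Suc t) \<omega>) * indicator (Lev M \<sigma> T \<theta> (Suc t)) \<omega>) = indicator (Lev M \<sigma> T \<theta> t)"
    by (simp add: fun_eq_iff indicator_Lev_Suc[OF t])
  moreover have "AE \<omega> in M. real_cond_exp M (F t) (S (Suc t)) \<omega>
      = real_cond_exp M (F t) (\<lambda>\<omega>. \<theta> (Suc t) \<omega> * indicator (Dset M \<sigma> (Suc t)) \<omega>
          + (1 - \<theta> (Suc t) \<omega>) * indicator (Lev M \<sigma> T \<theta> (Suc t)) \<omega>) \<omega>"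
    using repr unfolding snell_repr_def cprob_def
    by (intro real_cond_exp_switch_Suc integrable_indicator_real Lev_sets S_measurable Suc_t_le) auto
  ultimately show ?thesis
    by (simp add: cprob_def)
qed

lemma cond_exp_SV_Suc:
  "AE \<omega> in M. real_cond_exp M (F t) (\<lambda>\<omega>. S (Suc t) \<omega> * V (Suc t) \<omega>) \<omega>
     = real_cond_exp M (F t) (exit_payoff t) \<omega>"
proof -
  have "(\<lambda>\<omega>. \<theta> (Suc t) \<omega> * (G (Suc t) \<omega> * indicator (Dset M \<sigma> (Suc t)) \<omega>)
      + (1 - \<theta> (Suc t) \<omega>) * exit_payoff (Suc t) \<omega>) = exit_payoff t"
    by (simp add: fun_eq_iff exit_payoff_Suc[OF t])
  moreover have "AE \<omega> in M. real_cond_exp M (F t) (\<lambda>\<omega>. S (Suc t) \<omega> * V (Suc t) \<omega>) \<omega>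
      = real_cond_exp M (F t) (\<lambda>\<omega>. \<theta> (Suc t) \<omega> * (G (Suc t) \<omega> * indicator (Dset M \<sigma> (Suc t)) \<omega>)
          + (1 - \<theta> (Suc t) \<omega>) * exit_payoff (Suc t) \<omega>) \<omega>"
    using repr unfolding snell_repr_def
    by (intro real_cond_exp_switch_Suc integrable_payoff integrable_exit_payoff Suc_t_le
        borel_measurable_times measurable_Suc) auto
  ultimately show ?thesis
    by simp
qed

lemma cprob_Lev_pos:
  "AE \<omega> in M. t < Te M F \<sigma> T \<omega> \<longrightarrow> 0 < cprob M (F t) (Lev M \<sigma> T \<theta> t) \<omega>"
proof -
  interpret Fs: sigma_finite_subalgebra M "F (Suc t)"
    by (rule sigma_finite_subalgebra_F)
  define Z where "Z \<omega> = \<theta> (Suc t) \<omega> * indicator (Dset M \<sigma> (Suc t)) \<omega>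
    + (1 - \<theta> (Suc t) \<omega>) * cprob M (F (Suc t)) (Lev M \<sigma> T \<theta> (Suc t)) \<omega>" for \<omega>
  have S_eq: "AE \<omega> in M. S (Suc t) \<omega> = Z \<omega>"
    using repr by (simp add: snell_repr_def Z_def)
  have Z_int: "integrable M Z"
    unfolding Z_def[abs_def] cprob_def using Suc_t_le
    by (intro integrable_switch(3) integrable_indicator_real Fs.real_cond_exp_int(1)) (simp_all add: theta_def)
  have "AE \<omega> in M. 0 \<le> cprob M (F (Suc t)) (Lev M \<sigma> T \<theta> (Suc t)) \<omega>"
    unfolding cprob_def by (rule Fs.real_cond_exp_pos) auto
  moreover have "AE \<omega> in M. Suc t < Te M F \<sigma> T \<omega> \<longrightarrow> 0 < cprob M (F (Suc t)) (Lev M \<sigma> T \<theta> (Suc t)) \<omega>"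
    using repr by (simp add: snell_repr_def)
  ultimately have Z_pos: "AE \<omega> in M. 0 \<le> Z \<omega> \<and> (Z \<omega> = 0 \<longrightarrow> \<omega> \<notin> Dset M \<sigma> (Suc t))"
  proof eventually_elim
    case (elim \<omega>)
    then show ?case
      using theta_01[of "Suc t" \<omega>] less_Te_if_theta_0[OF Suc_t_le, of \<omega>] by (auto simp: Z_def)
  qed
  have "AE \<omega> in M. 0 < real_cond_exp M (F t) Z \<omega> \<or> cprob M (F t) (Dset M \<sigma> (Suc t)) \<omega> = 0"
    unfolding cprob_def using Z_int Z_pos
    by (intro Ft.real_cond_exp_pos_or_null integrable_indicator_real) auto
  moreover have "AE \<omega> in M. real_cond_exp M (F t) (S (Suc t)) \<omega> = real_cond_exp M (F t) Z \<omega>"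
    using S_eq Z_int by (intro Ft.real_cond_exp_cong) auto
  ultimately show ?thesis
    using cond_exp_S_Suc by eventually_elim (auto simp: less_Te_iff)
qed

lemma snell_repr_step: "snell_repr t"
proof -
  have "AE \<omega> in M. S t \<omega> = \<theta> t \<omega> * indicator (Dset M \<sigma> t) \<omega>
      + (1 - \<theta> t \<omega>) * cprob M (F t) (Lev M \<sigma> T \<theta> t) \<omega>
    \<and> S t \<omega> * V t \<omega> = \<theta> t \<omega> * (G t \<omega> * indicator (Dset M \<sigma> t) \<omega>)
      + (1 - \<theta> t \<omega>) * real_cond_exp M (F t) (exit_payoff t) \<omega>"
    using cond_exp_S_Suc cond_exp_SV_Suc cprob_Lev_pos Dset_if_less_Te[of t]
  proof eventually_elim
    case (elim \<omega>)
    then show ?case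
      using recursion_explicit[OF t, of \<omega>] by (auto simp: cont_value_def)
  qed
  then show ?thesis
    using cprob_Lev_pos by (auto simp: snell_repr_def)
qed

end

lemma snell_repr: "t \<le> T \<Longrightarrow> snell_repr t"
proof (induction t rule: inc_induct)
  case base
  show ?case
    by (rule snell_repr_last)
next
  case (step t)
  then show ?case
    using snell_repr_step by blast
qed

lemma admissible_theta: "admissible M F \<sigma> T \<theta>"
  unfolding admissible_def
proof (intro conjI allI impI ballI)
  fix t :: nat
  assume t: "t \<le> T"
  then show "\<theta> t \<in> borel_measurable (F t)"
    by (rule theta_measurable)
  show "AE \<omega> in M. t < Te M F \<sigma> T \<omega> \<longrightarrow> 0 < cprob M (F t) (Lev M \<sigma> T \<theta> t) \<omega>"
    using snell_repr[OF t] by (simp add: snell_repr_def)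
  show "AE \<omega> in M. Te M F \<sigma> T \<omega> \<le> t \<longrightarrow> \<theta> t \<omega> = 1"
    using theta_after_Te[OF t] by simp
qed (rule theta_01)

lemma J_eq_Jtheta: "AE \<omega> in M. t < Te M F \<sigma> T \<omega> \<longrightarrow> J t \<omega> = Jtheta M F \<sigma> G T \<theta> t \<omega>"
proof (cases "t < T")
  case True
  then have "snell_repr (Suc t)"
    by (intro snell_repr) simp
  with True have "AE \<omega> in M. real_cond_exp M (F t) (S (Suc t)) \<omega> = cprob M (F t) (Lev M \<sigma> T \<theta> t) \<omega>
      \<and> real_cond_exp M (F t) (\<lambda>\<omega>. S (Suc t) \<omega> * V (Suc t) \<omega>) \<omega> = real_cond_exp M (F t) (exit_payoff t) \<omega>"
    using cond_exp_S_Suc cond_exp_SV_Suc by auto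
  then show ?thesis
    by eventually_elim (simp add: J_def[OF True] Jtheta_eq)
qed (auto dest: less_Te_imp_less)

lemma cond_exp_S_eq_cprob:
  "AE \<omega> in M. t < Te M F \<sigma> T \<omega> \<longrightarrow>
     real_cond_exp M (F t) (S (Suc t)) \<omega> = cprob M (F t) (Lev M \<sigma> T \<theta> t) \<omega>"
proof (cases "t < T")
  case True
  then have "snell_repr (Suc t)"
    by (intro snell_repr) simp
  with cond_exp_S_Suc[OF True] show ?thesis
    by auto
qed (auto dest: less_Te_imp_less)

lemma S_cases:
  assumes "t \<le> T"
  shows "AE \<omega> in M.
      (\<omega> \<in> Dset M \<sigma> t \<and> \<theta> t \<omega> = 0 \<longrightarrow> S t \<omega> = cprob M (F t) (Lev M \<sigma> T \<theta> t) \<omega>)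
    \<and> (\<omega> \<in> Dset M \<sigma> t \<and> \<theta> t \<omega> = 1 \<longrightarrow> S t \<omega> = 1)
    \<and> (\<omega> \<notin> Dset M \<sigma> t \<longrightarrow> S t \<omega> = 0)"
proof -
  have "AE \<omega> in M. S t \<omega> = \<theta> t \<omega> * indicator (Dset M \<sigma> t) \<omega>
      + (1 - \<theta> t \<omega>) * cprob M (F t) (Lev M \<sigma> T \<theta> t) \<omega>"
    using snell_repr[OF assms] by (simp add: snell_repr_def)
  with Dset_if_less_Te[of t] show ?thesis
  proof eventually_elim
    case (elim \<omega>)
    then show ?case
      using theta_01[of t \<omega>] less_Te_if_theta_0[OF assms, of \<omega>] by auto
  qed
qed

end

theorem lemma3p2:
  fixes M :: "'a measure" and F :: "nat \<Rightarrow> 'a measure" and \<sigma> :: "'a \<Rightarrow> enat"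
    and G V S J \<theta> :: "nat \<Rightarrow> 'a \<Rightarrow> real" and T :: nat
  assumes prob: "prob_space M"
    and subalg: "\<And>t. subalgebra M (F t)"
    and filt: "\<And>s t. s \<le> t \<Longrightarrow> sets (F s) \<subseteq> sets (F t)"
    and F0: "sets (F 0) = {{}, space M}"
    and stopping: "\<And>t. {\<omega> \<in> space M. \<sigma> \<omega> \<le> enat t} \<in> sets (F t)"
    and sigma_pos: "AE \<omega> in M. 0 < \<sigma> \<omega>"
    and adapted: "\<And>t. G t \<in> borel_measurable (F t)"
    and integr: "integrable M (\<lambda>\<omega>. Max ((\<lambda>t. \<bar>G t \<omega>\<bar> * indicator (Dset M \<sigma> t) \<omega>) ` {..T}))"
    and V_T: "\<And>\<omega>. V T \<omega> = G T \<omega>"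
    and S_T: "\<And>\<omega>. S T \<omega> = indicator (Dset M \<sigma> T) \<omega>"
    and J_def: "\<And>t \<omega>. t < T \<Longrightarrow> t < Te M F \<sigma> T \<omega> \<Longrightarrow>
       J t \<omega> = real_cond_exp M (F t) (\<lambda>\<omega>'. S (Suc t) \<omega>' * V (Suc t) \<omega>') \<omega>
                / real_cond_exp M (F t) (S (Suc t)) \<omega>"
    and rec_stop: "\<And>t \<omega>. t < T \<Longrightarrow> t < Te M F \<sigma> T \<omega> \<Longrightarrow> G t \<omega> \<ge> J t \<omega> \<Longrightarrow>
       V t \<omega> = G t \<omega> \<and> S t \<omega> = 1"
    and rec_cont: "\<And>t \<omega>. t < T \<Longrightarrow> t < Te M F \<sigma> T \<omega> \<Longrightarrow> G t \<omega> < J t \<omega> \<Longrightarrow>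
       V t \<omega> = J t \<omega> \<and> S t \<omega> = real_cond_exp M (F t) (S (Suc t)) \<omega>"
    and rec_end: "\<And>t \<omega>. t < T \<Longrightarrow> Te M F \<sigma> T \<omega> \<le> t \<Longrightarrow>
       V t \<omega> = G t \<omega> \<and> S t \<omega> = indicator (Dset M \<sigma> t) \<omega>"
    and theta_def: "\<And>t \<omega>. \<theta> t \<omega> = (if G t \<omega> \<ge> V t \<omega> then 1 else 0)"
  shows "admissible M F \<sigma> T \<theta>
    \<and> (\<forall>t. AE \<omega> in M. t < Te M F \<sigma> T \<omega> \<longrightarrow> J t \<omega> = Jtheta M F \<sigma> G T \<theta> t \<omega>)
    \<and> (\<forall>t. AE \<omega> in M. t < Te M F \<sigma> T \<omega> \<longrightarrow>
          real_cond_exp M (F t) (S (Suc t)) \<omega> = cprob M (F t) (Lev M \<sigma> T \<theta> t) \<omega>)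
    \<and> (\<forall>t\<le>T. AE \<omega> in M.
          (\<omega> \<in> Dset M \<sigma> t \<and> \<theta> t \<omega> = 0 \<longrightarrow> S t \<omega> = cprob M (F t) (Lev M \<sigma> T \<theta> t) \<omega>)
        \<and> (\<omega> \<in> Dset M \<sigma> t \<and> \<theta> t \<omega> = 1 \<longrightarrow> S t \<omega> = 1)
        \<and> (\<omega> \<notin> Dset M \<sigma> t \<longrightarrow> S t \<omega> = 0))"
proof -
  interpret snell_recursion M F \<sigma> G T V S J \<theta>
    by (intro snell_recursion.intro stopping_problem.intro stopping_problem_axioms.intro
        snell_recursion_axioms.intro prob)
      (fact subalg filt stopping adapted integr V_T S_T J_def rec_stop rec_cont rec_end theta_def)+
  show ?thesis
    using admissible_theta J_eq_Jtheta cond_exp_S_eq_cprob S_cases by blast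
qed

end
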